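(* Let $\{\mathsf{P}_\theta : \theta \in \mathbb{T}\}$ be a statistical model for data $Y$ taking values in $\mathbb{Y}$, with likelihood $\theta \mapsto L_y(\theta)$ and maximum likelihood estimator $\hat\theta_y$ existing for each $y$. Let $R(y,\theta) = L_y(\theta)/L_y(\hat\theta_y)$, let $\pi_y(\theta) = \mathsf{P}_\theta\{R(Y,\theta) \le R(y,\theta)\}$, and define $\overline{\Pi}_y(H) = \sup_{\theta \in H} \pi_y(\theta)$ and $\underline{\Pi}_y(H) = 1 - \overline{\Pi}_y(H^c)$ for $H \subseteq \mathbb{T}$. Then for all $\alpha \in [0,1]$: (a) for any given $H \subseteq \mathbb{T}$, the test that rejects $H$ if and only if $\overline{\Pi}_Y(H) \le \alpha$ has Type I error probability at most $\alpha$, i.e., \[ \sup_{\Theta \in H} \mathsf{P}_\Theta\{ \overline{\Pi}_Y(H) \le \alpha \} \le \alpha; \] (b) the set $C_\alpha(Y) = \{\theta \in \mathbb{T} : \pi_Y(\theta) > \alpha\}$ has coverage probability at least $1-\alpha$, i.e., \[ \sup_{\Theta \in \mathbb{T}} \mathsf{P}_\Theta\{ C_\alpha(Y) \not\ni \Theta \} \le \alpha. \]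
   Context: Here $\Theta$ denotes the true parameter value and $Y \sim \mathsf{P}_\Theta$. The pair $(\underline{\Pi}_y, \overline{\Pi}_y)$ is the necessity–possibility measure pair (the inferential model output) determined by the possibility contour $\pi_y$. *)

theory Defs
  imports "HOL-Probability.Probability"
begin

text \<open>Statistical model: P theta is the distribution of the data Y for parameter theta
  (the parameter space is the whole type 'p); L y theta is the likelihood; mle y is
  a maximum likelihood estimate.\<close>

definition relLik :: "('y \<Rightarrow> 'p \<Rightarrow> real) \<Rightarrow> ('y \<Rightarrow> 'p) \<Rightarrow> 'y \<Rightarrow> 'p \<Rightarrow> real" where
  "relLik L mle y \<theta> = L y \<theta> / L y (mle y)"

definition plaus :: "('p \<Rightarrow> 'y measure) \<Rightarrow> ('y \<Rightarrow> 'p \<Rightarrow> real) \<Rightarrow> ('y \<Rightarrow> 'p) \<Rightarrow> 'y \<Rightarrow> 'p \<Rightarrow> real" where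
  "plaus P L mle y \<theta> =
     measure (P \<theta>) {y' \<in> space (P \<theta>). relLik L mle y' \<theta> \<le> relLik L mle y \<theta>}"

definition upperPi :: "('p \<Rightarrow> 'y measure) \<Rightarrow> ('y \<Rightarrow> 'p \<Rightarrow> real) \<Rightarrow> ('y \<Rightarrow> 'p) \<Rightarrow> 'y \<Rightarrow> 'p set \<Rightarrow> real" where
  "upperPi P L mle y H = (SUP \<theta>\<in>H. plaus P L mle y \<theta>)"

definition lowerPi :: "('p \<Rightarrow> 'y measure) \<Rightarrow> ('y \<Rightarrow> 'p \<Rightarrow> real) \<Rightarrow> ('y \<Rightarrow> 'p) \<Rightarrow> 'y \<Rightarrow> 'p set \<Rightarrow> real" where
  "lowerPi P L mle y H = 1 - upperPi P L mle y (- H)"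

end

theory Submission
  imports Defs
begin

text \<open>Validity of the possibility contour is an instance of the probability integral transform:
  for a real random variable \<open>T\<close> with distribution function \<open>F\<close>, the random variable \<open>F(T)\<close> is
  stochastically no smaller than a uniform one, i.e. \<open>P{F(T) \<le> \<alpha>} \<le> \<alpha>\<close>. Since
  \<open>\<pi>\<^sub>y(\<theta>) = F\<^sub>\<theta>(R(y,\<theta>))\<close> with \<open>F\<^sub>\<theta>\<close> the distribution function of \<open>R(Y,\<theta>)\<close> under \<open>P\<^sub>\<theta>\<close>,
  this gives (b) directly, and (a) follows because \<open>\<pi>\<^sub>Y(\<Theta>) \<le> \<Pi>\<^sub>Y(H)\<close> whenever \<open>\<Theta> \<in> H\<close>.\<close>

lemma (in real_distribution) measure_cdf_le:
  assumes "0 \<le> \<alpha>"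
  shows "measure M {t. cdf M t \<le> \<alpha>} \<le> \<alpha>"
proof -
  define S where "S = {t. cdf M t \<le> \<alpha>}"
  have down: "u \<in> S" if "u \<le> v" "v \<in> S" for u v
    using that cdf_nondecreasing[of u v] by (simp add: S_def)
  \<comment> \<open>being down-closed, \<open>S\<close> is empty, all of \<open>\<real>\<close>, \<open>{..Sup S}\<close> or \<open>{..<Sup S}\<close>\<close>
  consider "S = {}" | "\<not> bdd_above S" | "S \<noteq> {}" "bdd_above S" by blast
  then have "measure M S \<le> \<alpha>"
  proof cases
    case 1
    then show ?thesis using assms by simp
  next
    case 2
    then have "\<exists>v\<in>S. t < v" for t
      unfolding bdd_above_def by (auto simp: not_le)
    then have "S = UNIV"
      using down less_imp_le by blast
    then have "1 \<le> \<alpha>"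
      by (intro tendsto_upperbound[OF cdf_lim_at_top_prob]) (auto simp: S_def set_eq_iff)
    then show ?thesis using prob_le_1 by (rule order_trans[rotated])
  next
    case 3
    define s where "s = Sup S"
    show ?thesis
    proof (cases "s \<in> S")
      case True
      then have "cdf M s \<le> \<alpha>" by (simp add: S_def)
      moreover have "S = {..s}"
        using True 3 down by (auto simp: s_def intro: cSup_upper)
      ultimately show ?thesis by (simp add: cdf_def2)
    next
      case False
      have "S = {..<s}"
      proof
        show "S \<subseteq> {..<s}"
          using cSup_upper[OF _ \<open>bdd_above S\<close>] False by (fastforce simp: s_def order_le_less)
        show "{..<s} \<subseteq> S"
        proof
          fix t assume "t \<in> {..<s}"
          then obtain v where "v \<in> S" "t < v"
            using less_cSupD[OF \<open>S \<noteq> {}\<close>] by (auto simp: s_def)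
          then show "t \<in> S" using down less_imp_le by blast
        qed
      qed
      moreover have "eventually (\<lambda>t. cdf M t \<le> \<alpha>) (at_left s)"
      proof (rule eventually_at_leftI[of "s - 1"])
        fix t assume "t \<in> {s - 1<..<s}"
        then have "t \<in> S" using \<open>S = {..<s}\<close> by simp
        then show "cdf M t \<le> \<alpha>" by (simp add: S_def)
      qed simp
      ultimately show ?thesis
        using tendsto_upperbound[OF cdf_at_left] by simp
    qed
  qed
  then show ?thesis by (simp add: S_def)
qed

lemma (in real_distribution) sets_cdf_le: "{t. cdf M t \<le> \<alpha>} \<in> sets borel"
proof -
  have "cdf M \<in> borel_measurable borel"
    by (intro borel_measurable_mono monoI cdf_nondecreasing)
  then show ?thesis by measurable
qed

context prob_space
begin

lemma cdf_distr_eq: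
  fixes T :: "'a \<Rightarrow> real"
  assumes "T \<in> borel_measurable M"
  shows "cdf (distr M borel T) t = measure M {x \<in> space M. T x \<le> t}"
  using assms by (simp add: cdf_def2 measure_distr vimage_def Int_def conj_commute)

lemma sets_cdf_transform_le:
  fixes T :: "'a \<Rightarrow> real"
  assumes T: "T \<in> borel_measurable M"
  shows "{x \<in> space M. measure M {y \<in> space M. T y \<le> T x} \<le> \<alpha>} \<in> sets M"
proof -
  interpret N: real_distribution "distr M borel T" using T by simp
  have "T -` {t. cdf (distr M borel T) t \<le> \<alpha>} \<inter> space M \<in> sets M"
    using T N.sets_cdf_le by (rule measurable_sets)
  then show ?thesis
    using T by (simp add: cdf_distr_eq vimage_def Int_def conj_commute)
qed

lemma measure_cdf_transform_le:
  fixes T :: "'a \<Rightarrow> real"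
  assumes T: "T \<in> borel_measurable M" and "0 \<le> \<alpha>"
  shows "measure M {x \<in> space M. measure M {y \<in> space M. T y \<le> T x} \<le> \<alpha>} \<le> \<alpha>"
proof -
  interpret N: real_distribution "distr M borel T" using T by simp
  have "{x \<in> space M. measure M {y \<in> space M. T y \<le> T x} \<le> \<alpha>}
      = T -` {t. cdf (distr M borel T) t \<le> \<alpha>} \<inter> space M"
    using T by (auto simp: cdf_distr_eq)
  also have "measure M \<dots> = measure (distr M borel T) {t. cdf (distr M borel T) t \<le> \<alpha>}"
    using T N.sets_cdf_le by (rule measure_distr[symmetric])
  also have "\<dots> \<le> \<alpha>"
    using \<open>0 \<le> \<alpha>\<close> by (rule N.measure_cdf_le)
  finally show ?thesis .
qed

end

lemma plaus_le_upperPi: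
  assumes "\<forall>\<theta>. prob_space (P \<theta>)" and "\<theta> \<in> H"
  shows "plaus P L mle y \<theta> \<le> upperPi P L mle y H"
  unfolding upperPi_def
proof (rule cSUP_upper[OF \<open>\<theta> \<in> H\<close>])
  have "plaus P L mle y \<theta>' \<le> 1" for \<theta>'
    unfolding plaus_def using assms(1) prob_space.prob_le_1 by blast
  then show "bdd_above ((\<lambda>\<theta>. plaus P L mle y \<theta>) ` H)" by (meson bdd_above.I2)
qed

theorem corollary1:
  fixes P :: "'p \<Rightarrow> 'y measure" and \<mu> :: "'y measure"
    and L :: "'y \<Rightarrow> 'p \<Rightarrow> real" and mle :: "'y \<Rightarrow> 'p"
  assumes prob: "\<forall>\<theta>. prob_space (P \<theta>)"
    and dens: "\<forall>\<theta>. P \<theta> = density \<mu> (\<lambda>y. ennreal (L y \<theta>))"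
    and L_nonneg: "\<forall>y \<theta>. 0 \<le> L y \<theta>"
    and L_meas: "\<forall>\<theta>. (\<lambda>y. L y \<theta>) \<in> borel_measurable \<mu>"
    and mle: "\<forall>y\<in>space \<mu>. \<forall>\<theta>. L y \<theta> \<le> L y (mle y)"
    and R_meas: "\<forall>\<theta>. (\<lambda>y. relLik L mle y \<theta>) \<in> borel_measurable \<mu>"
  shows "\<forall>\<alpha>\<in>{0..1::real}.
           (\<forall>H \<Theta>. \<Theta> \<in> H \<longrightarrow>
              measure (P \<Theta>) {y \<in> space (P \<Theta>). upperPi P L mle y H \<le> \<alpha>} \<le> \<alpha>)
         \<and> (\<forall>\<Theta>. measure (P \<Theta>) {y \<in> space (P \<Theta>). \<Theta> \<notin> {\<theta>. plaus P L mle y \<theta> > \<alpha>}} \<le> \<alpha>)"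
proof (intro ballI conjI allI impI)
  fix \<alpha> :: real and \<Theta> :: 'p
  assume "\<alpha> \<in> {0..1}"
  interpret prob_space "P \<Theta>" using prob by blast
  have R: "(\<lambda>y. relLik L mle y \<Theta>) \<in> borel_measurable (P \<Theta>)"
    using R_meas dens by (metis measurable_cong_sets sets_density)
  let ?C = "{y \<in> space (P \<Theta>). plaus P L mle y \<Theta> \<le> \<alpha>}"
  have C: "?C \<in> sets (P \<Theta>)" "measure (P \<Theta>) ?C \<le> \<alpha>"
    using sets_cdf_transform_le[OF R] measure_cdf_transform_le[OF R] \<open>\<alpha> \<in> {0..1}\<close>
    by (simp_all add: plaus_def)
  then show "measure (P \<Theta>) {y \<in> space (P \<Theta>). \<Theta> \<notin> {\<theta>. plaus P L mle y \<theta> > \<alpha>}} \<le> \<alpha>"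
    by (simp add: not_less)
  fix H assume "\<Theta> \<in> H"
  then have "{y \<in> space (P \<Theta>). upperPi P L mle y H \<le> \<alpha>} \<subseteq> ?C"
    by (auto intro: order_trans[OF plaus_le_upperPi[OF prob \<open>\<Theta> \<in> H\<close>]])
  then show "measure (P \<Theta>) {y \<in> space (P \<Theta>). upperPi P L mle y H \<le> \<alpha>} \<le> \<alpha>"
    using finite_measure_mono C by (meson order_trans)
qed

end
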